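(* Let $p\ge 2$ and $\varphi\in\mathbb{C}^{p-1}\setminus\Omega_1$. Then $\dim H^1(F_\varphi,F_\varphi)=p-1$.
   Context: Let $p\ge 2$ and $\varphi=(\varphi_1,\dots,\varphi_{p-1})\in\mathbb{C}^{p-1}$. $F_\varphi$ denotes the $2p$-dimensional complex Lie algebra with basis $X_1,\dots,X_{2p}$ whose nonzero brackets (up to antisymmetry) are $[X_1,X_2]=X_1$, $[X_2,X_{2k+1}]=\varphi_kX_{2k+1}$, $[X_2,X_{2k+2}]=-(1+\varphi_k)X_{2k+2}$, $[X_{2k+1},X_{2k+2}]=X_1$ for $1\le k\le p-1$. $\Omega_1\subset\mathbb{C}^{p-1}$ is the union of the hyperplanes $\{1+\varphi_i+\varphi_j=0\}$, $\{2+\varphi_i+\varphi_j=0\}$ ($1\le i,j\le p-1$), $\{\varphi_i-\varphi_j=0\}$ ($1\le i\ne j\le p-1$), $\{\varphi_i=0\}$, $\{\varphi_i+1=0\}$, $\{2\varphi_i+1=0\}$ ($1\le i\le p-1$). $H^1(\mathfrak g,\mathfrak g)$ is the first Chevalley–Eilenberg cohomology with adjoint coefficients (derivations modulo inner derivations). *)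

theory Defs
  imports Complex_Main "HOL-Library.Function_Algebras"
begin

text \<open>Vectors of the 2p-dimensional Lie algebra F_phi are represented as functions
  nat => complex supported on the index set {1..2p} (coefficients w.r.t. X_1,...,X_2p).
  Linear endomorphisms are represented by their matrices nat => nat => complex
  (entry i j = coefficient of X_i in the image of X_j), supported on {1..2p} x {1..2p}.
  phi :: nat => complex, only phi 1, ..., phi (p-1) matter.\<close>

definition idx :: "nat \<Rightarrow> nat set" where
  "idx p = {1..2*p}"

definition ebas :: "nat \<Rightarrow> nat \<Rightarrow> complex" where
  "ebas j = (\<lambda>i. if i = j then 1 else 0)"

text \<open>The listed nonzero brackets [X_j, X_k] (with j < k).\<close>
definition br0 :: "(nat \<Rightarrow> complex) \<Rightarrow> nat \<Rightarrow> nat \<Rightarrow> nat \<Rightarrow> nat \<Rightarrow> complex" where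
  "br0 phi p j k =
     (if j = 1 \<and> k = 2 then ebas 1
      else if j = 2 \<and> 3 \<le> k \<and> k \<le> 2*p \<and> odd k then (\<lambda>i. phi ((k - 1) div 2) * ebas k i)
      else if j = 2 \<and> 4 \<le> k \<and> k \<le> 2*p \<and> even k then (\<lambda>i. - (1 + phi ((k - 2) div 2)) * ebas k i)
      else if 3 \<le> j \<and> odd j \<and> k = j + 1 \<and> k \<le> 2*p then ebas 1
      else (\<lambda>i. 0))"

definition brk :: "(nat \<Rightarrow> complex) \<Rightarrow> nat \<Rightarrow> nat \<Rightarrow> nat \<Rightarrow> nat \<Rightarrow> complex" where
  "brk phi p j k = (\<lambda>i. br0 phi p j k i - br0 phi p k j i)"

definition lie :: "(nat \<Rightarrow> complex) \<Rightarrow> nat \<Rightarrow> (nat \<Rightarrow> complex) \<Rightarrow> (nat \<Rightarrow> complex) \<Rightarrow> nat \<Rightarrow> complex" where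
  "lie phi p x y = (\<lambda>i. \<Sum>j\<in>idx p. \<Sum>k\<in>idx p. x j * y k * brk phi p j k i)"

definition supp_vec :: "nat \<Rightarrow> (nat \<Rightarrow> complex) \<Rightarrow> bool" where
  "supp_vec p x \<longleftrightarrow> (\<forall>i. i \<notin> idx p \<longrightarrow> x i = 0)"

definition supp_mat :: "nat \<Rightarrow> (nat \<Rightarrow> nat \<Rightarrow> complex) \<Rightarrow> bool" where
  "supp_mat p D \<longleftrightarrow> (\<forall>i j. i \<notin> idx p \<or> j \<notin> idx p \<longrightarrow> D i j = 0)"

definition app :: "nat \<Rightarrow> (nat \<Rightarrow> nat \<Rightarrow> complex) \<Rightarrow> (nat \<Rightarrow> complex) \<Rightarrow> nat \<Rightarrow> complex" where
  "app p D x = (\<lambda>i. \<Sum>j\<in>idx p. D i j * x j)"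

definition Der :: "(nat \<Rightarrow> complex) \<Rightarrow> nat \<Rightarrow> (nat \<Rightarrow> nat \<Rightarrow> complex) set" where
  "Der phi p = {D. supp_mat p D \<and>
      (\<forall>x y. supp_vec p x \<and> supp_vec p y \<longrightarrow>
         app p D (lie phi p x y) = lie phi p (app p D x) y + lie phi p x (app p D y))}"

definition ad :: "(nat \<Rightarrow> complex) \<Rightarrow> nat \<Rightarrow> (nat \<Rightarrow> complex) \<Rightarrow> nat \<Rightarrow> nat \<Rightarrow> complex" where
  "ad phi p x = (\<lambda>i j. if i \<in> idx p \<and> j \<in> idx p then lie phi p x (ebas j) i else 0)"

definition Inn :: "(nat \<Rightarrow> complex) \<Rightarrow> nat \<Rightarrow> (nat \<Rightarrow> nat \<Rightarrow> complex) set" where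
  "Inn phi p = {ad phi p x | x. supp_vec p x}"

definition mscale :: "complex \<Rightarrow> (nat \<Rightarrow> nat \<Rightarrow> complex) \<Rightarrow> nat \<Rightarrow> nat \<Rightarrow> complex" where
  "mscale c D = (\<lambda>i j. c * D i j)"

definition notOmega1 :: "nat \<Rightarrow> (nat \<Rightarrow> complex) \<Rightarrow> bool" where
  "notOmega1 p phi \<longleftrightarrow>
     (\<forall>i\<in>{1..p-1}. \<forall>j\<in>{1..p-1}.
         1 + phi i + phi j \<noteq> 0 \<and> 2 + phi i + phi j \<noteq> 0 \<and> (i \<noteq> j \<longrightarrow> phi i - phi j \<noteq> 0)) \<and>
     (\<forall>i\<in>{1..p-1}. phi i \<noteq> 0 \<and> phi i + 1 \<noteq> 0 \<and> 2 * phi i + 1 \<noteq> 0)"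

end

theory Submission
  imports Defs
begin

text \<open>Off Omega_1 the weights -1, 0, phi_q, -(1 + phi_q) of the diagonal operator ad X_2 are
  pairwise distinct. Evaluating the Leibniz rule on the pairs (X_2, X_k) then forces every
  derivation D to be an inner derivation ad x, with x read off from D X_2 and D X_1, plus a
  combination of the p - 1 diagonal derivations acting by 1 on X_(2q+1) and by -1 on X_(2q+2).
  These are independent modulo inner derivations, since the functional
  D \<mapsto> D_(2q+1,2q+1) + phi_q D_(1,1) kills all inner derivations and all diagonal ones
  except the q-th.\<close>

text \<open>dim is 0 on sets without a finite basis, hence the finite spanning set F.\<close>

lemma (in vector_space) dim_insert_notin_span:
  assumes "S \<subseteq> span F" "finite F" "v \<notin> span S"
  shows "dim (insert v S) = Suc (dim S)"
proof -
  obtain B where B: "B \<subseteq> S" "independent B" "S \<subseteq> span B" "card B = dim S"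
    using basis_exists by blast
  have "finite B"
    using independent_span_bound[OF assms(2) B(2)] B(1) assms(1) by blast
  have span_B: "span B = span S"
    using B(1,3) by (simp add: span_eq span_superset subset_trans)
  then have "v \<notin> span B" "v \<notin> B"
    using assms(3) span_superset by auto
  then have "independent (insert v B)"
    using B(2) independent_insertI by blast
  moreover have "span (insert v B) = span (insert v S)"
    by (simp add: span_insert span_B)
  ultimately have "dim (insert v S) = card (insert v B)"
    using dim_eq_card by blast
  with \<open>finite B\<close> \<open>v \<notin> B\<close> B(4) show ?thesis
    by simp
qed

lemma (in vector_space) dim_Un_image_notin_span:
  assumes "W \<subseteq> span F" "finite F" "finite Q"
    and "\<And>q. q \<in> Q \<Longrightarrow> t q \<notin> span (W \<union> t ` (Q - {q}))"
  shows "dim (W \<union> t ` Q) = dim W + card Q"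
  using assms(3,4)
proof (induction Q rule: finite_induct)
  case (insert q Q)
  have "t r \<notin> span (W \<union> t ` (Q - {r}))" if "r \<in> Q" for r
    using insert.prems[of r] that span_mono[of "W \<union> t ` (Q - {r})" "W \<union> t ` (insert q Q - {r})"]
    by blast
  then have IH: "dim (W \<union> t ` Q) = dim W + card Q"
    using insert.IH by blast
  have "t q \<notin> span (W \<union> t ` Q)"
    using insert.prems[of q] insert.hyps(2) by simp
  moreover have "W \<union> t ` Q \<subseteq> span (F \<union> t ` Q)"
    using assms(1) span_mono[of F "F \<union> t ` Q"] span_superset[of "F \<union> t ` Q"] by blast
  ultimately have "dim (insert (t q) (W \<union> t ` Q)) = Suc (dim (W \<union> t ` Q))"
    using dim_insert_notin_span assms(2) insert.hyps(1) by blast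
  then show ?case
    using IH insert.hyps by simp
qed simp

lemma sum_mult_if_single:
  fixes w c :: "nat \<Rightarrow> complex"
  assumes "finite A" "\<And>m. C m \<longleftrightarrow> m = a \<and> R"
  shows "(\<Sum>m\<in>A. w m * (if C m then c m else 0)) = (if a \<in> A \<and> R then w a * c a else 0)"
proof -
  have "(\<Sum>m\<in>A. w m * (if C m then c m else 0))
      = (\<Sum>m\<in>A. if m = a then (if R then w m * c m else 0) else 0)"
    by (rule sum.cong) (auto simp: assms(2))
  also have "\<dots> = (if a \<in> A \<and> R then w a * c a else 0)"
    using assms(1) by (simp add: sum.delta)
  finally show ?thesis .
qed

lemma sum_reverse3:
  "(\<Sum>m\<in>A. \<Sum>b\<in>B. \<Sum>a\<in>C. f a b m) = (\<Sum>a\<in>C. \<Sum>b\<in>B. \<Sum>m\<in>A. f a b m)"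
proof -
  have "(\<Sum>m\<in>A. \<Sum>b\<in>B. \<Sum>a\<in>C. f a b m) = (\<Sum>b\<in>B. \<Sum>m\<in>A. \<Sum>a\<in>C. f a b m)"
    by (rule sum.swap)
  also have "\<dots> = (\<Sum>b\<in>B. \<Sum>a\<in>C. \<Sum>m\<in>A. f a b m)"
    by (rule sum.cong[OF refl], rule sum.swap)
  also have "\<dots> = (\<Sum>a\<in>C. \<Sum>b\<in>B. \<Sum>m\<in>A. f a b m)"
    by (rule sum.swap)
  finally show ?thesis .
qed

lemma sum_apply2: "(\<Sum>q\<in>A. f q) i k = (\<Sum>q\<in>A. f q i k)"
  by (induction A rule: infinite_finite_induct) auto

lemma sum_ebas_mult:
  assumes "finite A"
  shows "(\<Sum>a\<in>A. ebas j a * f a) = (if j \<in> A then f j else 0)"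
proof -
  have "(\<Sum>a\<in>A. ebas j a * f a) = (\<Sum>a\<in>A. if a = j then f a else 0)"
    by (rule sum.cong) (auto simp: ebas_def)
  then show ?thesis
    using assms by (simp add: sum.delta')
qed

lemma sum_ebas_ebas:
  assumes "finite A" "j \<in> A" "k \<in> A"
  shows "(\<Sum>a\<in>A. \<Sum>b\<in>A. ebas j a * ebas k b * F a b) = F j k"
proof -
  have "(\<Sum>a\<in>A. \<Sum>b\<in>A. ebas j a * ebas k b * F a b)
      = (\<Sum>a\<in>A. ebas j a * (\<Sum>b\<in>A. ebas k b * F a b))"
    by (simp add: sum_distrib_left mult.assoc)
  then show ?thesis
    using assms by (simp add: sum_ebas_mult)
qed

interpretation mat: vector_space mscale
  by unfold_locales (auto simp: mscale_def fun_eq_iff algebra_simps)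

text \<open>[X_2, X_k] = weight phi k X_k; the only other nonzero brackets are [X_j, X_k] = X_1
  for paired p j k, i.e. j = 2q+1, k = 2q+2.\<close>

definition weight :: "(nat \<Rightarrow> complex) \<Rightarrow> nat \<Rightarrow> complex" where
  "weight phi k = (if k = 1 then -1 else if k = 2 then 0
     else if odd k then phi ((k - 1) div 2) else -(1 + phi ((k - 1) div 2)))"

definition paired :: "nat \<Rightarrow> nat \<Rightarrow> nat \<Rightarrow> bool" where
  "paired p j k \<longleftrightarrow> odd j \<and> 3 \<le> j \<and> k = j + 1 \<and> k \<le> 2*p"

lemma paired_left_iff: "paired p m k \<longleftrightarrow> m = k - 1 \<and> even k \<and> 4 \<le> k \<and> k \<le> 2*p"
  unfolding paired_def by auto

lemma paired_right_iff: "paired p j m \<longleftrightarrow> m = j + 1 \<and> odd j \<and> 3 \<le> j \<and> j + 1 \<le> 2*p"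
  unfolding paired_def by auto

lemma br0_explicit:
  "br0 phi p j k i = (if j = 1 \<and> k = 2 \<and> i = 1 then 1 else 0)
     + (if j = 2 \<and> i = k \<and> 3 \<le> k \<and> k \<le> 2*p then weight phi k else 0)
     + (if i = 1 \<and> paired p j k then 1 else 0)"
proof -
  have half: "(k - 2) div 2 = (k - 1) div 2" if "even k" for k :: nat
    using that by presburger
  consider "j = 1 \<and> k = 2" | "j = 2 \<and> 3 \<le> k \<and> k \<le> 2*p"
    | "3 \<le> j \<and> odd j \<and> k = j + 1 \<and> k \<le> 2*p"
    | "\<not> (j = 1 \<and> k = 2)" "\<not> (j = 2 \<and> 3 \<le> k \<and> k \<le> 2*p)"
      "\<not> (3 \<le> j \<and> odd j \<and> k = j + 1 \<and> k \<le> 2*p)"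
    by blast
  then show ?thesis
  proof cases
    case 2
    then show ?thesis
      by (cases "odd k") (auto simp: br0_def ebas_def paired_def weight_def half)
  qed (auto simp: br0_def ebas_def paired_def weight_def)
qed

lemma brk_explicit:
  assumes "p \<ge> 1"
  shows "brk phi p j k i = (if j = 2 \<and> i = k \<and> k \<in> idx p then weight phi k else 0)
     - (if k = 2 \<and> i = j \<and> j \<in> idx p then weight phi j else 0)
     + (if i = 1 \<and> paired p j k then 1 else 0) - (if i = 1 \<and> paired p k j then 1 else 0)"
  using assms unfolding brk_def br0_explicit idx_def
  by (auto simp: weight_def paired_def)

lemma finite_idx [simp]: "finite (idx p)"
  by (simp add: idx_def)

lemma idx_cases:
  assumes "n \<in> idx p"
  obtains "n = 1" | "n = 2"
    | q where "1 \<le> q" "q < p" "n = 2*q + 1"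
    | q where "1 \<le> q" "q < p" "n = 2*q + 2"
proof -
  consider "n = 1" | "n = 2" | "n \<ge> 3" "odd n" | "n \<ge> 3" "even n"
    using assms by (force simp: idx_def)
  then show ?thesis
  proof cases
    case 3
    then obtain q where "n = 2*q + 1" by (metis oddE)
    then show ?thesis using 3 assms that(3)[of q] by (auto simp: idx_def)
  next
    case 4
    then obtain q where "n = 2*q" by (metis evenE)
    then show ?thesis using 4 assms that(4)[of "q - 1"] by (auto simp: idx_def)
  qed (use that in auto)
qed

lemma weight_simps [simp]:
  "weight phi 1 = -1" "weight phi 2 = 0"
  "1 \<le> q \<Longrightarrow> weight phi (2*q + 1) = phi q"
  "1 \<le> q \<Longrightarrow> weight phi (2*q + 2) = -(1 + phi q)"
  "weight phi (Suc 0) = -1" "1 \<le> q \<Longrightarrow> weight phi (Suc (2*q)) = phi q"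
  "1 \<le> q \<Longrightarrow> weight phi (Suc (Suc (2*q))) = -(1 + phi q)"
  unfolding weight_def by auto

lemma parity_neq_simps [simp]:
  "2*q + 1 \<noteq> 2*(r::nat) + 2" "2*r + 2 \<noteq> 2*(q::nat) + 1" "2*(q::nat) + 1 \<noteq> 2" "2 \<noteq> 2*(q::nat) + 1"
  "2*(q::nat) + 1 \<noteq> 2*r" "2*(r::nat) \<noteq> 2*q + 1"
  "Suc (2*q) \<noteq> 2*(r::nat)" "2*(r::nat) \<noteq> Suc (2*q)"
  "Suc (Suc (2*q)) \<noteq> Suc (2*(r::nat))" "Suc (2*(r::nat)) \<noteq> Suc (Suc (2*q))"
  "Suc (2*q) \<noteq> 2" "2 \<noteq> Suc (2*q)"
  "Suc (Suc (Suc (2*q))) \<noteq> 2*(r::nat)" "2*(r::nat) \<noteq> Suc (Suc (Suc (2*q)))"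
  by presburger+

lemma notOmega1_weight_inj:
  assumes "notOmega1 p phi" "i \<in> idx p" "k \<in> idx p" "weight phi i = weight phi k"
  shows "i = k"
proof -
  have phi: "phi q \<noteq> 0" "phi q \<noteq> -1" "-1 \<noteq> phi q" "phi q \<noteq> -1 - phi r" "-1 - phi q \<noteq> phi r"
      "phi q = phi r \<longleftrightarrow> q = r"
    if "1 \<le> q" "q < p" "1 \<le> r" "r < p" for q r
  proof -
    have "phi q \<noteq> 0" "phi q + 1 \<noteq> 0" "1 + phi q + phi r \<noteq> 0" "q \<noteq> r \<Longrightarrow> phi q - phi r \<noteq> 0"
      using assms(1) that unfolding notOmega1_def by auto
    then show "phi q \<noteq> 0" "phi q \<noteq> -1" "-1 \<noteq> phi q" "phi q \<noteq> -1 - phi r" "-1 - phi q \<noteq> phi r"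
        "phi q = phi r \<longleftrightarrow> q = r"
      by (auto simp: eq_diff_eq diff_eq_eq add_eq_0_iff algebra_simps)
  qed
  show ?thesis
    using assms(4)
    by (cases rule: idx_cases[OF assms(2)]; cases rule: idx_cases[OF assms(3)]) (simp_all add: phi)
qed

lemma sum_brk_coord:
  assumes "p \<ge> 1"
  shows "(\<Sum>m\<in>idx p. w m * brk phi p j k m) =
       (if j = 2 \<and> k \<in> idx p then w k * weight phi k else 0)
     - (if k = 2 \<and> j \<in> idx p then w j * weight phi j else 0)
     + (if paired p j k then w 1 else 0) - (if paired p k j then w 1 else 0)"
proof -
  have "1 \<in> idx p" using assms by (simp add: idx_def)
  have "(\<Sum>m\<in>idx p. w m * brk phi p j k m) =
       (\<Sum>m\<in>idx p. w m * (if j = 2 \<and> m = k \<and> k \<in> idx p then weight phi k else 0))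
     - (\<Sum>m\<in>idx p. w m * (if k = 2 \<and> m = j \<and> j \<in> idx p then weight phi j else 0))
     + (\<Sum>m\<in>idx p. w m * (if m = 1 \<and> paired p j k then 1 else 0))
     - (\<Sum>m\<in>idx p. w m * (if m = 1 \<and> paired p k j then 1 else 0))"
    by (simp add: brk_explicit[OF assms] ring_distribs sum.distrib sum_subtractf)
  also have "\<dots> =
       (if j = 2 \<and> k \<in> idx p then w k * weight phi k else 0)
     - (if k = 2 \<and> j \<in> idx p then w j * weight phi j else 0)
     + (if paired p j k then w 1 else 0) - (if paired p k j then w 1 else 0)"
    apply (subst sum_mult_if_single[where a=k and R="j = 2 \<and> k \<in> idx p"], simp, blast)
    apply (subst sum_mult_if_single[where a=j and R="k = 2 \<and> j \<in> idx p"], simp, blast)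
    apply (subst sum_mult_if_single[where a=1 and R="paired p j k"], simp, blast)
    apply (subst sum_mult_if_single[where a=1 and R="paired p k j"], simp, blast)
    using \<open>1 \<in> idx p\<close> by auto
  finally show ?thesis .
qed

lemma sum_brk_left:
  assumes "p \<ge> 1"
  shows "(\<Sum>m\<in>idx p. w m * brk phi p m k i) =
       (if i = k \<and> k \<in> idx p then w 2 * weight phi k else 0)
     - (if k = 2 \<and> i \<in> idx p then w i * weight phi i else 0)
     + (if i = 1 \<and> even k \<and> 4 \<le> k \<and> k \<le> 2*p then w (k - 1) else 0)
     - (if i = 1 \<and> odd k \<and> 3 \<le> k \<and> k + 1 \<le> 2*p then w (k + 1) else 0)"
proof -
  have "2 \<in> idx p" using assms by (simp add: idx_def)
  have "(\<Sum>m\<in>idx p. w m * brk phi p m k i) =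
       (\<Sum>m\<in>idx p. w m * (if m = 2 \<and> i = k \<and> k \<in> idx p then weight phi k else 0))
     - (\<Sum>m\<in>idx p. w m * (if k = 2 \<and> i = m \<and> m \<in> idx p then weight phi m else 0))
     + (\<Sum>m\<in>idx p. w m * (if i = 1 \<and> paired p m k then 1 else 0))
     - (\<Sum>m\<in>idx p. w m * (if i = 1 \<and> paired p k m then 1 else 0))"
    by (simp add: brk_explicit[OF assms] ring_distribs sum.distrib sum_subtractf)
  also have "\<dots> =
       (if i = k \<and> k \<in> idx p then w 2 * weight phi k else 0)
     - (if k = 2 \<and> i \<in> idx p then w i * weight phi i else 0)
     + (if i = 1 \<and> even k \<and> 4 \<le> k \<and> k \<le> 2*p then w (k - 1) else 0)
     - (if i = 1 \<and> odd k \<and> 3 \<le> k \<and> k + 1 \<le> 2*p then w (k + 1) else 0)"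
    apply (subst sum_mult_if_single[where a=2 and R="i = k \<and> k \<in> idx p"], simp, blast)
    apply (subst sum_mult_if_single[where a=i and R="k = 2 \<and> i \<in> idx p"], simp, blast)
    apply (subst sum_mult_if_single[where a="k - 1" and R="i = 1 \<and> even k \<and> 4 \<le> k \<and> k \<le> 2*p"],
        simp, simp add: paired_left_iff, blast)
    apply (subst sum_mult_if_single[where a="k + 1" and R="i = 1 \<and> odd k \<and> 3 \<le> k \<and> k + 1 \<le> 2*p"],
        simp, simp add: paired_right_iff, blast)
    using \<open>2 \<in> idx p\<close> by (auto simp: idx_def)
  finally show ?thesis .
qed

lemma sum_brk_right:
  assumes "p \<ge> 1"
  shows "(\<Sum>m\<in>idx p. w m * brk phi p j m i) =
       (if j = 2 \<and> i \<in> idx p then w i * weight phi i else 0)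
     - (if i = j \<and> j \<in> idx p then w 2 * weight phi j else 0)
     + (if i = 1 \<and> odd j \<and> 3 \<le> j \<and> j + 1 \<le> 2*p then w (j + 1) else 0)
     - (if i = 1 \<and> even j \<and> 4 \<le> j \<and> j \<le> 2*p then w (j - 1) else 0)"
proof -
  have "2 \<in> idx p" using assms by (simp add: idx_def)
  have "(\<Sum>m\<in>idx p. w m * brk phi p j m i) =
       (\<Sum>m\<in>idx p. w m * (if j = 2 \<and> i = m \<and> m \<in> idx p then weight phi m else 0))
     - (\<Sum>m\<in>idx p. w m * (if m = 2 \<and> i = j \<and> j \<in> idx p then weight phi j else 0))
     + (\<Sum>m\<in>idx p. w m * (if i = 1 \<and> paired p j m then 1 else 0))
     - (\<Sum>m\<in>idx p. w m * (if i = 1 \<and> paired p m j then 1 else 0))"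
    by (simp add: brk_explicit[OF assms] ring_distribs sum.distrib sum_subtractf)
  also have "\<dots> =
       (if j = 2 \<and> i \<in> idx p then w i * weight phi i else 0)
     - (if i = j \<and> j \<in> idx p then w 2 * weight phi j else 0)
     + (if i = 1 \<and> odd j \<and> 3 \<le> j \<and> j + 1 \<le> 2*p then w (j + 1) else 0)
     - (if i = 1 \<and> even j \<and> 4 \<le> j \<and> j \<le> 2*p then w (j - 1) else 0)"
    apply (subst sum_mult_if_single[where a=i and R="j = 2 \<and> i \<in> idx p"], simp, blast)
    apply (subst sum_mult_if_single[where a=2 and R="i = j \<and> j \<in> idx p"], simp, blast)
    apply (subst sum_mult_if_single[where a="j + 1" and R="i = 1 \<and> odd j \<and> 3 \<le> j \<and> j + 1 \<le> 2*p"],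
        simp, simp add: paired_right_iff, blast)
    apply (subst sum_mult_if_single[where a="j - 1" and R="i = 1 \<and> even j \<and> 4 \<le> j \<and> j \<le> 2*p"],
        simp, simp add: paired_left_iff, blast)
    using \<open>2 \<in> idx p\<close> by (auto simp: idx_def)
  finally show ?thesis .
qed

lemma app_lie_expand:
  "app p D (lie phi p x y) i =
     (\<Sum>a\<in>idx p. \<Sum>b\<in>idx p. x a * y b * (\<Sum>m\<in>idx p. D i m * brk phi p a b m))"
proof -
  have "app p D (lie phi p x y) i = (\<Sum>m\<in>idx p. \<Sum>a\<in>idx p. \<Sum>b\<in>idx p. x a * y b * (D i m * brk phi p a b m))"
    unfolding app_def lie_def by (simp add: sum_distrib_left mult_ac)
  also have "\<dots> = (\<Sum>a\<in>idx p. \<Sum>b\<in>idx p. \<Sum>m\<in>idx p. x a * y b * (D i m * brk phi p a b m))"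
    by (subst sum.swap, rule sum.cong[OF refl], rule sum.swap)
  finally show ?thesis by (simp add: sum_distrib_left)
qed

lemma lie_app_left_expand:
  "lie phi p (app p D x) y i =
     (\<Sum>a\<in>idx p. \<Sum>b\<in>idx p. x a * y b * (\<Sum>m\<in>idx p. D m a * brk phi p m b i))"
proof -
  have "lie phi p (app p D x) y i = (\<Sum>m\<in>idx p. \<Sum>b\<in>idx p. \<Sum>a\<in>idx p. x a * y b * (D m a * brk phi p m b i))"
    unfolding app_def lie_def by (simp add: sum_distrib_left sum_distrib_right mult_ac)
  also have "\<dots> = (\<Sum>a\<in>idx p. \<Sum>b\<in>idx p. \<Sum>m\<in>idx p. x a * y b * (D m a * brk phi p m b i))"
    by (rule sum_reverse3)
  finally show ?thesis by (simp add: sum_distrib_left)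
qed

lemma lie_app_right_expand:
  "lie phi p x (app p D y) i =
     (\<Sum>a\<in>idx p. \<Sum>b\<in>idx p. x a * y b * (\<Sum>m\<in>idx p. D m b * brk phi p a m i))"
proof -
  have "lie phi p x (app p D y) i = (\<Sum>a\<in>idx p. \<Sum>m\<in>idx p. \<Sum>b\<in>idx p. x a * y b * (D m b * brk phi p a m i))"
    unfolding app_def lie_def by (simp add: sum_distrib_left sum_distrib_right mult_ac)
  also have "\<dots> = (\<Sum>a\<in>idx p. \<Sum>b\<in>idx p. \<Sum>m\<in>idx p. x a * y b * (D m b * brk phi p a m i))"
    by (rule sum.cong[OF refl], rule sum.swap)
  finally show ?thesis by (simp add: sum_distrib_left)
qed

lemma lie_ebas_right:
  assumes "k \<in> idx p"
  shows "lie phi p x (ebas k) i = (\<Sum>a\<in>idx p. x a * brk phi p a k i)"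
proof -
  have "lie phi p x (ebas k) i = (\<Sum>a\<in>idx p. \<Sum>b\<in>idx p. ebas k b * (x a * brk phi p a b i))"
    unfolding lie_def by (simp add: mult_ac)
  then show ?thesis
    using assms by (simp add: sum_ebas_mult)
qed

definition leibniz_basis ::
    "(nat \<Rightarrow> complex) \<Rightarrow> nat \<Rightarrow> (nat \<Rightarrow> nat \<Rightarrow> complex) \<Rightarrow> nat \<Rightarrow> nat \<Rightarrow> nat \<Rightarrow> bool" where
  "leibniz_basis phi p D j k i \<longleftrightarrow>
     (\<Sum>m\<in>idx p. D i m * brk phi p j k m) =
     (\<Sum>m\<in>idx p. D m j * brk phi p m k i) + (\<Sum>m\<in>idx p. D m k * brk phi p j m i)"

lemma Der_iff_leibniz_basis:
  "D \<in> Der phi p \<longleftrightarrow>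
     supp_mat p D \<and> (\<forall>j\<in>idx p. \<forall>k\<in>idx p. \<forall>i. leibniz_basis phi p D j k i)"
proof
  assume D: "D \<in> Der phi p"
  have "leibniz_basis phi p D j k i" if "j \<in> idx p" "k \<in> idx p" for j k i
  proof -
    have "supp_vec p (ebas j)" "supp_vec p (ebas k)"
      using that by (auto simp: supp_vec_def ebas_def)
    with D have "app p D (lie phi p (ebas j) (ebas k)) i =
        lie phi p (app p D (ebas j)) (ebas k) i + lie phi p (ebas j) (app p D (ebas k)) i"
      by (simp add: Der_def)
    then show ?thesis
      using that unfolding app_lie_expand lie_app_left_expand lie_app_right_expand leibniz_basis_def
      by (simp add: sum_ebas_ebas)
  qed
  with D show "supp_mat p D \<and> (\<forall>j\<in>idx p. \<forall>k\<in>idx p. \<forall>i. leibniz_basis phi p D j k i)"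
    by (simp add: Der_def)
next
  assume "supp_mat p D \<and> (\<forall>j\<in>idx p. \<forall>k\<in>idx p. \<forall>i. leibniz_basis phi p D j k i)"
  then show "D \<in> Der phi p"
    unfolding Der_def leibniz_basis_def
    by (simp add: fun_eq_iff app_lie_expand lie_app_left_expand lie_app_right_expand
        ring_distribs sum.distrib)
qed

lemma Der_leibniz_basis:
  "D \<in> Der phi p \<Longrightarrow> j \<in> idx p \<Longrightarrow> k \<in> idx p \<Longrightarrow> leibniz_basis phi p D j k i"
  by (simp add: Der_iff_leibniz_basis)

lemma leibniz_basis_iff:
  assumes "p \<ge> 1"
  shows "leibniz_basis phi p D j k i \<longleftrightarrow>
      (if j = 2 \<and> k \<in> idx p then D i k * weight phi k else 0)
    - (if k = 2 \<and> j \<in> idx p then D i j * weight phi j else 0)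
    + (if paired p j k then D i 1 else 0) - (if paired p k j then D i 1 else 0)
  = ((if i = k \<and> k \<in> idx p then D 2 j * weight phi k else 0)
    - (if k = 2 \<and> i \<in> idx p then D i j * weight phi i else 0)
    + (if i = 1 \<and> even k \<and> 4 \<le> k \<and> k \<le> 2*p then D (k - 1) j else 0)
    - (if i = 1 \<and> odd k \<and> 3 \<le> k \<and> k + 1 \<le> 2*p then D (k + 1) j else 0))
  + ((if j = 2 \<and> i \<in> idx p then D i k * weight phi i else 0)
    - (if i = j \<and> j \<in> idx p then D 2 k * weight phi j else 0)
    + (if i = 1 \<and> odd j \<and> 3 \<le> j \<and> j + 1 \<le> 2*p then D (j + 1) k else 0)
    - (if i = 1 \<and> even j \<and> 4 \<le> j \<and> j \<le> 2*p then D (j - 1) k else 0))"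
  unfolding leibniz_basis_def sum_brk_coord[OF assms] sum_brk_left[OF assms] sum_brk_right[OF assms]
  ..

lemma leibniz_basis_outside:
  assumes "p \<ge> 1" "supp_mat p D" "j \<in> idx p" "k \<in> idx p" "i \<notin> idx p"
  shows "leibniz_basis phi p D j k i"
proof -
  have "i \<noteq> 1" "i \<noteq> 2" "i \<noteq> j" "i \<noteq> k"
    using assms by (auto simp: idx_def)
  moreover have "D i m = 0" for m
    using assms(2,5) by (simp add: supp_mat_def)
  ultimately show ?thesis
    using assms(5) by (simp add: leibniz_basis_iff[OF assms(1)])
qed

lemma Der_intro:
  assumes "p \<ge> 1" "supp_mat p D"
    and "\<And>j k i. j \<in> idx p \<Longrightarrow> k \<in> idx p \<Longrightarrow> i \<in> idx p \<Longrightarrow> leibniz_basis phi p D j k i"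
  shows "D \<in> Der phi p"
  unfolding Der_iff_leibniz_basis
  using assms leibniz_basis_outside[OF assms(1,2)] by blast

definition ad_matrix :: "(nat \<Rightarrow> complex) \<Rightarrow> nat \<Rightarrow> (nat \<Rightarrow> complex) \<Rightarrow> nat \<Rightarrow> nat \<Rightarrow> complex" where
  "ad_matrix phi p x i k =
      (if i = k \<and> k \<in> idx p then x 2 * weight phi k else 0)
    - (if k = 2 \<and> i \<in> idx p then x i * weight phi i else 0)
    + (if i = 1 \<and> even k \<and> 4 \<le> k \<and> k \<le> 2*p then x (k - 1) else 0)
    - (if i = 1 \<and> odd k \<and> 3 \<le> k \<and> k + 1 \<le> 2*p then x (k + 1) else 0)"

lemma ad_eq_ad_matrix: "p \<ge> 1 \<Longrightarrow> ad phi p x = ad_matrix phi p x"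
  unfolding ad_def ad_matrix_def
  by (simp add: fun_eq_iff lie_ebas_right sum_brk_left) (auto simp: idx_def)

lemma supp_mat_ad_matrix: "p \<ge> 1 \<Longrightarrow> supp_mat p (ad_matrix phi p x)"
  by (auto simp: supp_mat_def ad_matrix_def idx_def)

lemma ad_matrix_Der:
  assumes "p \<ge> 1"
  shows "ad_matrix phi p x \<in> Der phi p"
proof (rule Der_intro[OF assms])
  show "supp_mat p (ad_matrix phi p x)"
    using assms by (auto simp: supp_mat_def ad_matrix_def idx_def)
next
  fix j k i assume "j \<in> idx p" "k \<in> idx p" "i \<in> idx p"
  then show "leibniz_basis phi p (ad_matrix phi p x) j k i"
    unfolding leibniz_basis_iff[OF assms]
    by (cases rule: idx_cases[OF \<open>j \<in> idx p\<close>]; cases rule: idx_cases[OF \<open>k \<in> idx p\<close>];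
        cases rule: idx_cases[OF \<open>i \<in> idx p\<close>])
      (use assms in \<open>simp_all add: ad_matrix_def idx_def paired_def, simp_all add: algebra_simps\<close>)
qed

lemma Inn_eq: "p \<ge> 1 \<Longrightarrow> Inn phi p = ad_matrix phi p ` {x. supp_vec p x}"
  unfolding Inn_def by (auto simp: ad_eq_ad_matrix)

definition diag_der :: "nat \<Rightarrow> nat \<Rightarrow> nat \<Rightarrow> complex" where
  "diag_der q = (\<lambda>i k. if i = k \<and> i = 2*q + 1 then 1 else if i = k \<and> i = 2*q + 2 then -1 else 0)"

lemma diag_der_Der:
  assumes "p \<ge> 1" "1 \<le> q" "q < p"
  shows "diag_der q \<in> Der phi p"
proof (rule Der_intro[OF assms(1)])
  show "supp_mat p (diag_der q)"
    using assms by (auto simp: supp_mat_def diag_der_def idx_def)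
next
  fix j k i assume "j \<in> idx p" "k \<in> idx p" "i \<in> idx p"
  then show "leibniz_basis phi p (diag_der q) j k i"
    unfolding leibniz_basis_iff[OF assms(1)]
    by (cases rule: idx_cases[OF \<open>j \<in> idx p\<close>]; cases rule: idx_cases[OF \<open>k \<in> idx p\<close>];
        cases rule: idx_cases[OF \<open>i \<in> idx p\<close>])
      (use assms in \<open>simp_all add: diag_der_def idx_def paired_def\<close>)
qed

lemma diag_der_sum_apply:
  "(\<Sum>q\<in>{1..<p}. mscale (c q) (diag_der q)) i k =
    (if i = k \<and> 3 \<le> i \<and> i \<le> 2*p then (if odd i then c ((i - 1) div 2) else - c ((i - 1) div 2)) else 0)"
proof (cases "i = k \<and> 3 \<le> i \<and> i \<le> 2*p")
  case True
  define r where "r = (i - 1) div 2"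
  have r: "r \<in> {1..<p}" and "i = 2*r + 1 \<or> i = 2*r + 2"
    using True unfolding r_def by auto
  then have "mscale (c q) (diag_der q) i k = (if q = r then (if odd i then c r else - c r) else 0)" for q
    using True by (auto simp: mscale_def diag_der_def)
  then show ?thesis
    using True r by (simp add: sum_apply2 r_def)
next
  case False
  then have "mscale (c q) (diag_der q) i k = 0" if "q \<in> {1..<p}" for q
    using that by (auto simp: mscale_def diag_der_def)
  then have "(\<Sum>q\<in>{1..<p}. mscale (c q) (diag_der q)) i k = 0"
    by (simp add: sum_apply2)
  with False show ?thesis
    by (simp only: if_False)
qed

lemma Der_entry_2_2:
  assumes "p \<ge> 1" "D \<in> Der phi p"
  shows "D 2 2 = 0"
proof -
  have "1 \<in> idx p" "2 \<in> idx p"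
    using assms(1) by (auto simp: idx_def)
  then have "leibniz_basis phi p D 2 1 1"
    using assms(2) Der_leibniz_basis by blast
  with \<open>1 \<in> idx p\<close> show ?thesis
    by (simp add: leibniz_basis_iff[OF assms(1)] paired_def)
qed

lemma Der_diag_pair_sum:
  assumes "p \<ge> 1" "D \<in> Der phi p" "1 \<le> q" "q < p"
  shows "D (2*q + 1) (2*q + 1) + D (2*q + 2) (2*q + 2) = D 1 1"
proof -
  have "2*q + 1 \<in> idx p" "2*q + 2 \<in> idx p"
    using assms(3,4) by (auto simp: idx_def)
  then have "leibniz_basis phi p D (2*q + 1) (2*q + 2) 1"
    using assms(2) Der_leibniz_basis by blast
  with assms(3,4) show ?thesis
    by (simp add: leibniz_basis_iff[OF assms(1)] paired_def)
qed

lemma Der_entry_eq_0: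
  assumes "p \<ge> 1" "notOmega1 p phi" "D \<in> Der phi p"
    and "i \<in> idx p" "k \<in> idx p" "i \<noteq> k" "i \<noteq> 1" "k \<noteq> 2"
  shows "D i k = 0"
proof -
  have "2 \<in> idx p"
    using assms(1) by (simp add: idx_def)
  then have "leibniz_basis phi p D 2 k i"
    using assms(3,5) Der_leibniz_basis by blast
  moreover have "\<not> paired p 2 k" "\<not> paired p k 2"
    by (auto simp: paired_def)
  ultimately have "D i k * weight phi k = D i k * weight phi i"
    using assms(4-8) \<open>2 \<in> idx p\<close> by (auto simp: leibniz_basis_iff[OF assms(1)])
  moreover have "weight phi k \<noteq> weight phi i"
    using notOmega1_weight_inj[OF assms(2,4,5)] assms(6) by metis
  ultimately show ?thesis
    by simp
qed

lemma Der_entry_1_odd: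
  assumes "p \<ge> 1" "D \<in> Der phi p" "1 \<le> q" "q < p"
  shows "D 1 (2*q + 1) * (1 + phi q) = - D (2*q + 2) 2"
proof -
  have "2 \<in> idx p" "2*q + 1 \<in> idx p"
    using assms(3,4) by (auto simp: idx_def)
  then have "leibniz_basis phi p D 2 (2*q + 1) 1"
    using assms(2) Der_leibniz_basis by blast
  with assms(3,4) have "D 1 (2*q + 1) * phi q = - D (2*q + 2) 2 - D 1 (2*q + 1)"
    by (simp add: leibniz_basis_iff[OF assms(1)] paired_def idx_def)
  then show ?thesis
    by (simp add: algebra_simps)
qed

lemma Der_entry_1_even:
  assumes "p \<ge> 1" "D \<in> Der phi p" "1 \<le> q" "q < p"
  shows "D 1 (2*q + 2) * phi q = - D (2*q + 1) 2"
proof -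
  have "2 \<in> idx p" "2*q + 2 \<in> idx p"
    using assms(3,4) by (auto simp: idx_def)
  then have "leibniz_basis phi p D 2 (2*q + 2) 1"
    using assms(2) Der_leibniz_basis by blast
  with assms(3,4) have "D 1 (2*q + 2) * (- 1 - phi q) = D (2*q + 1) 2 - D 1 (2*q + 2)"
    by (simp add: leibniz_basis_iff[OF assms(1)] paired_def idx_def)
  then show ?thesis
    by (simp add: algebra_simps equation_minus_iff)
qed

text \<open>The diagonal of ad x is x_2 times the weights, which are phi q at 2q+1 and -1 at 1;
  hence outer_coeff vanishes on inner derivations.\<close>

definition outer_coeff :: "(nat \<Rightarrow> complex) \<Rightarrow> nat \<Rightarrow> (nat \<Rightarrow> nat \<Rightarrow> complex) \<Rightarrow> complex" where
  "outer_coeff phi q D = D (2*q + 1) (2*q + 1) + phi q * D 1 1"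

lemma Der_decomposition:
  assumes p: "p \<ge> 1" and N: "notOmega1 p phi" and D: "D \<in> Der phi p"
  obtains x where "supp_vec p x"
    "D = ad_matrix phi p x + (\<Sum>q\<in>{1..<p}. mscale (outer_coeff phi q D) (diag_der q))"
proof
  have "1 \<in> idx p" "2 \<in> idx p"
    using p by (auto simp: idx_def)
  \<comment> \<open>chosen so that ad x agrees with D on X_2 and in the (1,1) entry:
    ad x maps X_2 to -(\<Sum>n. x_n weight_n X_n), and its (1,1) entry is -x_2\<close>
  define x where
    "x n = (if n = 2 then - D 1 1 else if n \<in> idx p then - D n 2 / weight phi n else 0)" for n
  show "supp_vec p x"
    unfolding supp_vec_def x_def using \<open>2 \<in> idx p\<close> by auto
  define T where "T = (\<Sum>q\<in>{1..<p}. mscale (outer_coeff phi q D) (diag_der q))"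
  have T: "T i k = (if i = k \<and> 3 \<le> i \<and> i \<le> 2*p then
      (if odd i then outer_coeff phi ((i - 1) div 2) D else - outer_coeff phi ((i - 1) div 2) D) else 0)" for i k
    unfolding T_def by (rule diag_der_sum_apply)
  have "D i k = ad_matrix phi p x i k + T i k" for i k
  proof -
    consider (out) "i \<notin> idx p \<or> k \<notin> idx p" | (col2) "i \<in> idx p" "k = 2"
      | (diag) "i \<in> idx p" "k = i" "k \<noteq> 2"
      | (off) "i \<in> idx p" "k \<in> idx p" "i \<noteq> k" "k \<noteq> 2" "i \<noteq> 1"
      | (row1) "k \<in> idx p" "i = 1" "k \<noteq> 1" "k \<noteq> 2"
      by blast
    then show ?thesis
    proof cases
      case out
      then show ?thesis
        using D supp_mat_ad_matrix[OF p]
        by (auto simp: supp_mat_def Der_def T idx_def)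
    next
      case col2
      show ?thesis
      proof (cases "i = 2")
        case True
        then show ?thesis
          using col2 Der_entry_2_2[OF p D] by (simp add: ad_matrix_def T)
      next
        case False
        then have "weight phi i \<noteq> 0"
          using notOmega1_weight_inj[OF N col2(1) \<open>2 \<in> idx p\<close>] by auto
        then show ?thesis
          using col2 False by (simp add: ad_matrix_def T x_def)
      qed
    next
      case diag
      show ?thesis
        using diag(1)
      proof (cases rule: idx_cases)
        case (3 q)
        then show ?thesis
          using diag by (simp add: ad_matrix_def T x_def outer_coeff_def)
      next
        case (4 q)
        then have "(2*q + 1) div 2 = q"
          by simp
        with 4 show ?thesis
          using diag Der_diag_pair_sum[OF p D 4(1,2)]
          by (simp add: ad_matrix_def T x_def outer_coeff_def) (simp add: algebra_simps)
      qed (use diag in \<open>simp_all add: ad_matrix_def T x_def\<close>)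
    next
      case off
      then show ?thesis
        using Der_entry_eq_0[OF p N D off(1,2,3,5,4)]
        by (simp add: ad_matrix_def T)
    next
      case row1
      show ?thesis
        using row1(1)
      proof (cases rule: idx_cases)
        case (3 q)
        have "1 + phi q \<noteq> 0"
          using N 3(1,2) unfolding notOmega1_def by (auto simp: add.commute)
        then have "D 1 k = - D (2*q + 2) 2 / (1 + phi q)"
          using Der_entry_1_odd[OF p D 3(1,2)] 3(3) by (simp add: field_simps)
        then show ?thesis
          using row1 3 by (simp add: ad_matrix_def T x_def idx_def minus_divide_right)
      next
        case (4 q)
        have "phi q \<noteq> 0"
          using N 4(1,2) unfolding notOmega1_def by auto
        then have "D 1 k = - D (2*q + 1) 2 / phi q"
          using Der_entry_1_even[OF p D 4(1,2)] 4(3) by (simp add: field_simps)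
        then show ?thesis
          using row1 4 by (simp add: ad_matrix_def T x_def idx_def)
      qed (use row1 in simp_all)
    qed
  qed
  then show "D = ad_matrix phi p x + (\<Sum>q\<in>{1..<p}. mscale (outer_coeff phi q D) (diag_der q))"
    by (simp add: fun_eq_iff T_def)
qed

lemma outer_coeff_ad_matrix:
  "1 \<le> q \<Longrightarrow> q < p \<Longrightarrow> outer_coeff phi q (ad_matrix phi p x) = 0"
  unfolding outer_coeff_def ad_matrix_def by (simp add: idx_def)

lemma outer_coeff_diag_der:
  "1 \<le> q \<Longrightarrow> 1 \<le> r \<Longrightarrow> outer_coeff phi q (diag_der r) = (if q = r then 1 else 0)"
  unfolding outer_coeff_def diag_der_def by simp

lemma subspace_outer_coeff_eq_0: "mat.subspace {D. outer_coeff phi q D = 0}"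
proof -
  have "outer_coeff phi q 0 = 0"
    "outer_coeff phi q (D + E) = outer_coeff phi q D + outer_coeff phi q E"
    "outer_coeff phi q (mscale c D) = c * outer_coeff phi q D" for D E c
    by (simp_all add: outer_coeff_def mscale_def algebra_simps)
  then show ?thesis
    by (simp add: mat.subspace_def)
qed

definition matrix_unit :: "nat \<Rightarrow> nat \<Rightarrow> nat \<Rightarrow> nat \<Rightarrow> complex" where
  "matrix_unit a b = (\<lambda>i j. if i = a \<and> j = b then 1 else 0)"

lemma supp_mat_in_span_matrix_units:
  assumes "supp_mat p D"
  shows "D \<in> mat.span ((\<lambda>(a, b). matrix_unit a b) ` (idx p \<times> idx p))"
proof -
  have "D = (\<Sum>(a, b)\<in>idx p \<times> idx p. mscale (D a b) (matrix_unit a b))"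
  proof (intro ext)
    fix i j
    have "(\<Sum>(a, b)\<in>idx p \<times> idx p. mscale (D a b) (matrix_unit a b)) i j
        = (\<Sum>ab\<in>idx p \<times> idx p. if ab = (i, j) then D i j else 0)"
      unfolding sum_apply2 by (rule sum.cong) (auto simp: mscale_def matrix_unit_def split: if_splits)
    also have "\<dots> = D i j"
      using assms by (auto simp: supp_mat_def)
    finally show "D i j = (\<Sum>(a, b)\<in>idx p \<times> idx p. mscale (D a b) (matrix_unit a b)) i j" ..
  qed
  also have "\<dots> \<in> mat.span ((\<lambda>(a, b). matrix_unit a b) ` (idx p \<times> idx p))"
    by (intro mat.span_sum) (auto intro: mat.span_scale[OF mat.span_base])
  finally show ?thesis .
qed

lemma span_Der_eq:
  assumes "p \<ge> 1" "notOmega1 p phi"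
  shows "mat.span (Der phi p) = mat.span (Inn phi p \<union> diag_der ` {1..<p})"
proof -
  have "Inn phi p \<union> diag_der ` {1..<p} \<subseteq> Der phi p"
    using assms(1) ad_matrix_Der diag_der_Der by (auto simp: Inn_eq)
  moreover have "Der phi p \<subseteq> mat.span (Inn phi p \<union> diag_der ` {1..<p})"
  proof
    fix D assume "D \<in> Der phi p"
    then obtain x where x: "supp_vec p x"
      and D: "D = ad_matrix phi p x + (\<Sum>q\<in>{1..<p}. mscale (outer_coeff phi q D) (diag_der q))"
      using Der_decomposition assms by blast
    have "ad_matrix phi p x \<in> mat.span (Inn phi p \<union> diag_der ` {1..<p})"
      using x assms(1) by (intro mat.span_base) (auto simp: Inn_eq)
    moreover have "(\<Sum>q\<in>{1..<p}. mscale (outer_coeff phi q D) (diag_der q))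
        \<in> mat.span (Inn phi p \<union> diag_der ` {1..<p})"
      by (intro mat.span_sum mat.span_scale mat.span_base) auto
    ultimately show "D \<in> mat.span (Inn phi p \<union> diag_der ` {1..<p})"
      by (subst D) (rule mat.span_add)
  qed
  ultimately show ?thesis
    unfolding mat.span_eq using mat.span_superset[of "Der phi p"] by blast
qed

lemma diag_der_notin_span:
  assumes "p \<ge> 1" "q \<in> {1..<p}"
  shows "diag_der q \<notin> mat.span (Inn phi p \<union> diag_der ` ({1..<p} - {q}))"
proof -
  have "Inn phi p \<union> diag_der ` ({1..<p} - {q}) \<subseteq> {D. outer_coeff phi q D = 0}"
    using assms by (auto simp: Inn_eq outer_coeff_ad_matrix outer_coeff_diag_der)
  then have "mat.span (Inn phi p \<union> diag_der ` ({1..<p} - {q})) \<subseteq> {D. outer_coeff phi q D = 0}"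
    by (rule mat.span_minimal[OF _ subspace_outer_coeff_eq_0])
  moreover have "outer_coeff phi q (diag_der q) = 1"
    using assms(2) by (simp add: outer_coeff_diag_der)
  ultimately show ?thesis
    by auto
qed

theorem corollary1:
  fixes p :: nat and phi :: "nat \<Rightarrow> complex"
  assumes "p \<ge> 2" and "notOmega1 p phi"
  shows "vector_space.dim mscale (Der phi p) = vector_space.dim mscale (Inn phi p) + (p - 1)"
proof -
  have p: "p \<ge> 1"
    using assms(1) by simp
  have "Inn phi p \<subseteq> mat.span ((\<lambda>(a, b). matrix_unit a b) ` (idx p \<times> idx p))"
    by (auto simp: Inn_def ad_def supp_mat_def intro: supp_mat_in_span_matrix_units)
  then have "mat.dim (Inn phi p \<union> diag_der ` {1..<p}) = mat.dim (Inn phi p) + card {1..<p}"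
    using diag_der_notin_span[OF p] by (intro mat.dim_Un_image_notin_span) auto
  moreover have "mat.dim (Der phi p) = mat.dim (Inn phi p \<union> diag_der ` {1..<p})"
    using span_Der_eq[OF p assms(2)] by (rule mat.span_eq_dim)
  ultimately show ?thesis
    by simp
qed

end
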